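(* Under the standing assumptions (A1)–(A4) below, for every $A\in\mathbb{R}^{k\times d}$ with rows $a_1,\dots,a_k$, $$L_4(A)=\sum_{m\in[k]}\mathbb{E}[p_m^\ast(x)]\sum_{i\ne j}\langle a_m^\ast,a_i\rangle^2\langle a_m^\ast,a_j\rangle^2-\mu\sum_{m,i\in[k]}\mathbb{E}[p_m^\ast(x)]\langle a_m^\ast,a_i\rangle^4+\lambda\sum_{i\in[k]}\Big(\sum_{m\in[k]}\mathbb{E}[p_m^\ast(x)]\langle a_m^\ast,a_i\rangle^2-1\Big)^2+\frac{\delta}{2}\|A\|_F^2.$$
   Context: Mixture-of-experts model: $k\ge2$, $d$; input $x\in\mathbb{R}^d$; regressors $a_1^\ast,\dots,a_k^\ast$; gating parameters $w_1^\ast,\dots,w_{k-1}^\ast$, $w_k^\ast=0$; activation $g:\mathbb{R}\to\mathbb{R}$; noise $\sigma>0$. Output $y=\sum_iz_ig(\langle a_i^\ast,x\rangle)+\xi$, $\xi\sim\mathcal N(0,\sigma^2)$ independent of $x$, $z$ one-hot with $\Pr(z_i=1|x)=p_i^\ast(x):=e^{\langle w_i^\ast,x\rangle}/\sum_je^{\langle w_j^\ast,x\rangle}$. Valid non-linearity: with $Z\sim\mathcal N(0,1)$, $Y|Z\sim\mathcal N(g(Z),\sigma^2)$, $\mathcal Q_4(y)=y^4+\alpha y^3+\beta y^2+\gamma y$, $\mathcal Q_2(y)=y^2+\delta'y$, $h_4(Z)=\mathbb{E}[\mathcal Q_4(Y)|Z]$, $h_2(Z)=\mathbb{E}[\mathcal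 Q_2(Y)|Z]$: $g$ is valid if for some $(\alpha,\beta,\gamma,\delta')$, $\mathbb{E}[h_4Z]=\mathbb{E}[h_4(Z^2-1)]=\mathbb{E}[h_4(Z^3-3Z)]=0\ne\mathbb{E}[h_4(Z^4-6Z^2+3)]$ and $\mathbb{E}[h_2Z]=0\ne\mathbb{E}[h_2(Z^2-1)]$; $\mathcal Q_4,\mathcal Q_2$ use this tuple. Standing assumptions: (A1) $x\sim\mathcal N(0,I_d)$; (A2) $\|a_i^\ast\|=1$, $\|w_i^\ast\|\le R$; (A3) $a_i^\ast$ linearly independent, $w_i^\ast$ orthogonal to their span, $2k-1<d$; (A4) $g$ valid. Let $c_{g,\sigma},c'_{g,\sigma}$ be the nonzero constants with $\mathbb{E}[\mathcal Q_4(y)\mathcal S_4(x)]=c_{g,\sigma}\sum_i\mathbb{E}[p_i^\ast(x)](a_i^\ast)^{\otimes4}$ and $\mathbb{E}[\mathcal Q_2(y)\mathcal S_2(x)]=c'_{g,\sigma}\sum_i\mathbb{E}[p_i^\ast(x)](a_i^\ast)^{\otimes2}$, where $\mathcal S_m(x)=\nabla_x^mf(x)/f(x)$, $f$ the standard Gaussian density. Define $t_3(u,x)=((u^\top x)^2-\|u\|^2)/c'_{g,\sigma}$, $t_2(u,x)=((u^\top x)^4-6\|u\|^2(u^\top x)^2+3\|u\|^4)/c_{g,\sigma}$, $t_1(u,v,x)=((u^\top x)^2(v^\top x)^2-\|u\|^2(v^\top x)^2-4(u^\top x)(v^\top x)(u^\top v)-\|v\|^2(u^\top x)^2+\|u\|^2\|v\|^2+2(u^\top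 v)^2)/c_{g,\sigma}$, and for constants $\mu,\lambda,\delta>0$: $L_4(A)=\sum_{i\ne j}\mathbb{E}[\mathcal Q_4(y)t_1(a_i,a_j,x)]-\mu\sum_i\mathbb{E}[\mathcal Q_4(y)t_2(a_i,x)]+\lambda\sum_i(\mathbb{E}[\mathcal Q_2(y)t_3(a_i,x)]-1)^2+\frac{\delta}{2}\|A\|_F^2$. *)

theory Defs
  imports "HOL-Probability.Probability"
begin

definition gauss_dens :: "'a::euclidean_space \<Rightarrow> real" where
  "gauss_dens x = (2 * pi) powr (- real DIM('a) / 2) * exp (- (norm x)\<^sup>2 / 2)"

definition Ex :: "('a::euclidean_space \<Rightarrow> real) \<Rightarrow> real" where
  "Ex f = (\<integral>x. f x * gauss_dens x \<partial>lborel)"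

text \<open>Gating probabilities p_i(x), experts indexed by 0..k-1.\<close>
definition gate :: "nat \<Rightarrow> (nat \<Rightarrow> 'a::euclidean_space) \<Rightarrow> nat \<Rightarrow> 'a \<Rightarrow> real" where
  "gate k w i x = exp (w i \<bullet> x) / (\<Sum>j<k. exp (w j \<bullet> x))"

text \<open>Joint density of (x,y) in the mixture-of-experts model (latent z marginalised).\<close>
definition moe_dens :: "nat \<Rightarrow> (nat \<Rightarrow> 'a::euclidean_space) \<Rightarrow> (nat \<Rightarrow> 'a) \<Rightarrow> (real \<Rightarrow> real)
    \<Rightarrow> real \<Rightarrow> 'a \<Rightarrow> real \<Rightarrow> real" where
  "moe_dens k astar w g \<sigma> x y =
     gauss_dens x * (\<Sum>i<k. gate k w i x * normal_density (g (astar i \<bullet> x)) \<sigma> y)"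

definition Exy :: "nat \<Rightarrow> (nat \<Rightarrow> 'a::euclidean_space) \<Rightarrow> (nat \<Rightarrow> 'a) \<Rightarrow> (real \<Rightarrow> real)
    \<Rightarrow> real \<Rightarrow> ('a \<Rightarrow> real \<Rightarrow> real) \<Rightarrow> real" where
  "Exy k astar w g \<sigma> h =
     (\<integral>z. h (fst z) (snd z) * moe_dens k astar w g \<sigma> (fst z) (snd z) \<partial>(lborel :: ('a \<times> real) measure))"

definition Q4 :: "real \<Rightarrow> real \<Rightarrow> real \<Rightarrow> real \<Rightarrow> real" where
  "Q4 \<alpha> \<beta> \<gamma> y = y ^ 4 + \<alpha> * y ^ 3 + \<beta> * y\<^sup>2 + \<gamma> * y"

definition Q2 :: "real \<Rightarrow> real \<Rightarrow> real" where
  "Q2 dl y = y\<^sup>2 + dl * y"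

definition valid_tuple :: "(real \<Rightarrow> real) \<Rightarrow> real \<Rightarrow> real \<Rightarrow> real \<Rightarrow> real \<Rightarrow> real \<Rightarrow> bool" where
  "valid_tuple g \<sigma> \<alpha> \<beta> \<gamma> dl \<longleftrightarrow>
    (let h4 = (\<lambda>z. \<integral>y. Q4 \<alpha> \<beta> \<gamma> y * normal_density (g z) \<sigma> y \<partial>lborel);
         h2 = (\<lambda>z. \<integral>y. Q2 dl y * normal_density (g z) \<sigma> y \<partial>lborel);
         EZ = (\<lambda>f. \<integral>z. f z * std_normal_density z \<partial>lborel)
     in EZ (\<lambda>z. h4 z * z) = 0 \<and> EZ (\<lambda>z. h4 z * (z\<^sup>2 - 1)) = 0
      \<and> EZ (\<lambda>z. h4 z * (z ^ 3 - 3 * z)) = 0 \<and> EZ (\<lambda>z. h4 z * (z ^ 4 - 6 * z\<^sup>2 + 3)) \<noteq> 0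
      \<and> EZ (\<lambda>z. h2 z * z) = 0 \<and> EZ (\<lambda>z. h2 z * (z\<^sup>2 - 1)) \<noteq> 0)"

definition valid_nonlinearity :: "(real \<Rightarrow> real) \<Rightarrow> real \<Rightarrow> bool" where
  "valid_nonlinearity g \<sigma> \<longleftrightarrow> (\<exists>\<alpha> \<beta> \<gamma> dl. valid_tuple g \<sigma> \<alpha> \<beta> \<gamma> dl)"

text \<open>The score tensors S_4(x) = grad^4 f / f and S_2(x) = grad^2 f / f of the standard
  Gaussian density, as multilinear forms (contractions with u1,...,u4).\<close>
definition S4form :: "'a::euclidean_space \<Rightarrow> 'a \<Rightarrow> 'a \<Rightarrow> 'a \<Rightarrow> 'a \<Rightarrow> real" where
  "S4form x u1 u2 u3 u4 =
     (u1 \<bullet> x) * (u2 \<bullet> x) * (u3 \<bullet> x) * (u4 \<bullet> x)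
     - ((u1 \<bullet> u2) * (u3 \<bullet> x) * (u4 \<bullet> x) + (u1 \<bullet> u3) * (u2 \<bullet> x) * (u4 \<bullet> x)
        + (u1 \<bullet> u4) * (u2 \<bullet> x) * (u3 \<bullet> x) + (u2 \<bullet> u3) * (u1 \<bullet> x) * (u4 \<bullet> x)
        + (u2 \<bullet> u4) * (u1 \<bullet> x) * (u3 \<bullet> x) + (u3 \<bullet> u4) * (u1 \<bullet> x) * (u2 \<bullet> x))
     + (u1 \<bullet> u2) * (u3 \<bullet> u4) + (u1 \<bullet> u3) * (u2 \<bullet> u4) + (u1 \<bullet> u4) * (u2 \<bullet> u3)"

definition S2form :: "'a::euclidean_space \<Rightarrow> 'a \<Rightarrow> 'a \<Rightarrow> real" where
  "S2form x u1 u2 = (u1 \<bullet> x) * (u2 \<bullet> x) - u1 \<bullet> u2"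

definition t3 :: "real \<Rightarrow> 'a::euclidean_space \<Rightarrow> 'a \<Rightarrow> real" where
  "t3 c' u x = ((u \<bullet> x)\<^sup>2 - (norm u)\<^sup>2) / c'"

definition t2 :: "real \<Rightarrow> 'a::euclidean_space \<Rightarrow> 'a \<Rightarrow> real" where
  "t2 c u x = ((u \<bullet> x) ^ 4 - 6 * (norm u)\<^sup>2 * (u \<bullet> x)\<^sup>2 + 3 * (norm u) ^ 4) / c"

definition t1 :: "real \<Rightarrow> 'a::euclidean_space \<Rightarrow> 'a \<Rightarrow> 'a \<Rightarrow> real" where
  "t1 c u v x = ((u \<bullet> x)\<^sup>2 * (v \<bullet> x)\<^sup>2 - (norm u)\<^sup>2 * (v \<bullet> x)\<^sup>2
      - 4 * (u \<bullet> x) * (v \<bullet> x) * (u \<bullet> v) - (norm v)\<^sup>2 * (u \<bullet> x)\<^sup>2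
      + (norm u)\<^sup>2 * (norm v)\<^sup>2 + 2 * (u \<bullet> v)\<^sup>2) / c"

text \<open>The objective L_4(A); A is given by its rows a 0, ..., a (k-1).\<close>
definition L4 :: "nat \<Rightarrow> (nat \<Rightarrow> 'a::euclidean_space) \<Rightarrow> (nat \<Rightarrow> 'a) \<Rightarrow> (real \<Rightarrow> real) \<Rightarrow> real
    \<Rightarrow> real \<Rightarrow> real \<Rightarrow> real \<Rightarrow> real \<Rightarrow> real \<Rightarrow> real
    \<Rightarrow> real \<Rightarrow> real \<Rightarrow> real \<Rightarrow> (nat \<Rightarrow> 'a) \<Rightarrow> real" where
  "L4 k astar w g \<sigma> \<alpha> \<beta> \<gamma> dl c c' \<mu> lam \<delta> a =
     (\<Sum>i<k. \<Sum>j\<in>{..<k} - {i}. Exy k astar w g \<sigma> (\<lambda>x y. Q4 \<alpha> \<beta> \<gamma> y * t1 c (a i) (a j) x))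
     - \<mu> * (\<Sum>i<k. Exy k astar w g \<sigma> (\<lambda>x y. Q4 \<alpha> \<beta> \<gamma> y * t2 c (a i) x))
     + lam * (\<Sum>i<k. (Exy k astar w g \<sigma> (\<lambda>x y. Q2 dl y * t3 c' (a i) x) - 1)\<^sup>2)
     + \<delta> / 2 * (\<Sum>i<k. (norm (a i))\<^sup>2)"

end

theory Submission
  imports Defs
begin

text \<open>The test functions \<open>t\<^sub>1, t\<^sub>2, t\<^sub>3\<close> are the score forms \<open>S\<^sub>4(x)[u,u,v,v]\<close>,
  \<open>S\<^sub>4(x)[u,u,u,u]\<close> and \<open>S\<^sub>2(x)[u,u]\<close> divided by \<open>c\<close> resp. \<open>c'\<close>. Hence each expectation
  in \<open>L\<^sub>4\<close> is the moment tensor \<open>\<Sum>\<^sub>m E[p\<^sub>m] (a\<^sub>m\<^sup>*)\<^sup>\<otimes>\<^sup>4\<close> (resp. its second-order analogue)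
  contracted with the rows of \<open>A\<close>, the constants cancelling; exchanging the order of the
  finite sums gives the formula. The standing assumptions enter only through the two moment
  identities defining \<open>c\<close> and \<open>c'\<close>.\<close>

lemma t1_eq_S4form: "t1 c u v x = S4form x u u v v / c"
  unfolding t1_def S4form_def power2_norm_eq_inner
  by (simp add: algebra_simps power2_eq_square inner_commute)

lemma t2_eq_S4form: "t2 c u x = S4form x u u u u / c"
  unfolding t2_def S4form_def power2_norm_eq_inner[symmetric]
  by (simp add: power2_norm_eq_inner algebra_simps power2_eq_square power4_eq_xxxx)

lemma t3_eq_S2form: "t3 c u x = S2form x u u / c"
  unfolding t3_def S2form_def power2_norm_eq_inner
  by (simp add: power2_eq_square)

lemma Exy_divide: "Exy k astar w g \<sigma> (\<lambda>x y. f x y / c) = Exy k astar w g \<sigma> f / c"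
  unfolding Exy_def
  by (rule trans[OF _ integral_divide_zero], rule Bochner_Integration.integral_cong) simp_all

lemma Exy_t1_eq_moment:
  assumes "Exy k astar w g \<sigma> (\<lambda>x y. f y * S4form x u u v v)
             = c * (\<Sum>m<k. p m * (astar m \<bullet> u) * (astar m \<bullet> u) * (astar m \<bullet> v) * (astar m \<bullet> v))"
    and "c \<noteq> 0"
  shows "Exy k astar w g \<sigma> (\<lambda>x y. f y * t1 c u v x)
           = (\<Sum>m<k. p m * (astar m \<bullet> u)\<^sup>2 * (astar m \<bullet> v)\<^sup>2)"
proof -
  have "Exy k astar w g \<sigma> (\<lambda>x y. f y * t1 c u v x)
          = Exy k astar w g \<sigma> (\<lambda>x y. f y * S4form x u u v v) / c"
    by (simp add: t1_eq_S4form flip: Exy_divide)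
  then show ?thesis
    using assms by (simp add: power2_eq_square mult.assoc)
qed

lemma Exy_t2_eq_moment:
  assumes "Exy k astar w g \<sigma> (\<lambda>x y. f y * S4form x u u u u)
             = c * (\<Sum>m<k. p m * (astar m \<bullet> u) * (astar m \<bullet> u) * (astar m \<bullet> u) * (astar m \<bullet> u))"
    and "c \<noteq> 0"
  shows "Exy k astar w g \<sigma> (\<lambda>x y. f y * t2 c u x) = (\<Sum>m<k. p m * (astar m \<bullet> u) ^ 4)"
proof -
  have "Exy k astar w g \<sigma> (\<lambda>x y. f y * t2 c u x)
          = Exy k astar w g \<sigma> (\<lambda>x y. f y * S4form x u u u u) / c"
    by (simp add: t2_eq_S4form flip: Exy_divide)
  then show ?thesis
    using assms by (simp add: power4_eq_xxxx mult.assoc)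
qed

lemma Exy_t3_eq_moment:
  assumes "Exy k astar w g \<sigma> (\<lambda>x y. f y * S2form x u u)
             = c * (\<Sum>m<k. p m * (astar m \<bullet> u) * (astar m \<bullet> u))"
    and "c \<noteq> 0"
  shows "Exy k astar w g \<sigma> (\<lambda>x y. f y * t3 c u x) = (\<Sum>m<k. p m * (astar m \<bullet> u)\<^sup>2)"
proof -
  have "Exy k astar w g \<sigma> (\<lambda>x y. f y * t3 c u x)
          = Exy k astar w g \<sigma> (\<lambda>x y. f y * S2form x u u) / c"
    by (simp add: t3_eq_S2form flip: Exy_divide)
  then show ?thesis
    using assms by (simp add: power2_eq_square mult.assoc)
qed

lemma sum_offdiag_pull_weights:
  fixes p :: "'m \<Rightarrow> 'b::comm_semiring_0"
  shows "(\<Sum>i\<in>I. \<Sum>j\<in>I - {i}. \<Sum>m\<in>M. p m * f m i * h m j)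
           = (\<Sum>m\<in>M. p m * (\<Sum>i\<in>I. \<Sum>j\<in>I - {i}. f m i * h m j))"
proof -
  have "(\<Sum>i\<in>I. \<Sum>j\<in>I - {i}. \<Sum>m\<in>M. p m * f m i * h m j)
          = (\<Sum>i\<in>I. \<Sum>m\<in>M. \<Sum>j\<in>I - {i}. p m * f m i * h m j)"
    by (rule sum.cong[OF refl], rule sum.swap)
  also have "\<dots> = (\<Sum>m\<in>M. \<Sum>i\<in>I. \<Sum>j\<in>I - {i}. p m * f m i * h m j)"
    by (rule sum.swap)
  finally show ?thesis
    by (simp only: sum_distrib_left mult.assoc)
qed

theorem theorem5:
  fixes k :: nat and astar w a :: "nat \<Rightarrow> 'a::euclidean_space" and g :: "real \<Rightarrow> real"
    and \<sigma> R \<mu> lam \<delta> \<alpha> \<beta> \<gamma> dl c c' :: real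
  assumes k2: "k \<ge> 2"
    and sigma: "\<sigma> > 0"
    and pos: "\<mu> > 0" "lam > 0" "\<delta> > 0"
    and A2a: "\<forall>i<k. norm (astar i) = 1"
    and A2w: "\<forall>i<k. norm (w i) \<le> R"
    and wk: "w (k - 1) = 0"
    and A3ind: "inj_on astar {..<k}" "independent (astar ` {..<k})"
    and A3orth: "\<forall>i<k-1. \<forall>v\<in>span (astar ` {..<k}). w i \<bullet> v = 0"
    and A3dim: "2 * k - 1 < DIM('a)"
    and A4: "valid_tuple g \<sigma> \<alpha> \<beta> \<gamma> dl"
    and c_nz: "c \<noteq> 0" and c'_nz: "c' \<noteq> 0"
    and c_def: "\<forall>u1 u2 u3 u4. Exy k astar w g \<sigma> (\<lambda>x y. Q4 \<alpha> \<beta> \<gamma> y * S4form x u1 u2 u3 u4)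
                 = c * (\<Sum>i<k. Ex (gate k w i) * (astar i \<bullet> u1) * (astar i \<bullet> u2)
                                                * (astar i \<bullet> u3) * (astar i \<bullet> u4))"
    and c'_def: "\<forall>u1 u2. Exy k astar w g \<sigma> (\<lambda>x y. Q2 dl y * S2form x u1 u2)
                 = c' * (\<Sum>i<k. Ex (gate k w i) * (astar i \<bullet> u1) * (astar i \<bullet> u2))"
  shows "L4 k astar w g \<sigma> \<alpha> \<beta> \<gamma> dl c c' \<mu> lam \<delta> a =
     (\<Sum>m<k. Ex (gate k w m) * (\<Sum>i<k. \<Sum>j\<in>{..<k} - {i}.
          (astar m \<bullet> a i)\<^sup>2 * (astar m \<bullet> a j)\<^sup>2))
     - \<mu> * (\<Sum>m<k. \<Sum>i<k. Ex (gate k w m) * (astar m \<bullet> a i) ^ 4)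
     + lam * (\<Sum>i<k. ((\<Sum>m<k. Ex (gate k w m) * (astar m \<bullet> a i)\<^sup>2) - 1)\<^sup>2)
     + \<delta> / 2 * (\<Sum>i<k. (norm (a i))\<^sup>2)"
proof -
  note t1_moment = Exy_t1_eq_moment[OF c_def[rule_format] c_nz]
  note t2_moment = Exy_t2_eq_moment[OF c_def[rule_format] c_nz]
  note t3_moment = Exy_t3_eq_moment[OF c'_def[rule_format] c'_nz]
  show ?thesis
    unfolding L4_def t1_moment t2_moment t3_moment sum_offdiag_pull_weights
      sum.swap[of "\<lambda>i m. Ex (gate k w m) * (astar m \<bullet> a i) ^ 4"] ..
qed

end
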